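(* Let $G$ be a Borel groupoid acting freely on the right of a Borel space $X$ such that the quotient map $q:X\to X/G$ has a Borel cross section. Then $X$ is a proper Borel $G$-space.
   Context: All Borel spaces are analytic. A right Borel $G$-space $X$ has a Borel moment map $s_X:X\to G^{(0)}$ and a Borel action $x\cdot\gamma$ defined when $s_X(x)=r(\gamma)$; it is free if $x\cdot\gamma=x$ implies $\gamma$ is a unit. $X/G$ carries the quotient Borel structure. $X$ is a proper right Borel $G$-space if the transformation groupoid $X\rtimes G=\{(x,\gamma):s_X(x)=r(\gamma)\}$ (with $(x,\gamma)(x\cdot\gamma,\eta)=(x,\gamma\eta)$ and unit space $X$) is a proper Borel groupoid, i.e. there is a family $\{m^x\}_{x\in X}$ of probability measures on $X\rtimes G$, $m^x$ supported on the range fibre over $x$, with $x\mapsto\int f\,dm^x$ Borel for nonnegative Borel $f$ and $g\cdot m^{s(g)}=m^{r(g)}$ for all $g\in X\rtimes G$. *)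

theory Defs
  imports "HOL-Probability.Probability"
begin

text \<open>A subset of the reals is analytic if it is empty or a continuous image of
  the Baire space nat => nat (product topology of discrete nat).\<close>
definition analytic_real_set :: "real set \<Rightarrow> bool" where
  "analytic_real_set A \<longleftrightarrow> A = {} \<or>
     (\<exists>h :: (nat \<Rightarrow> nat) \<Rightarrow> real. continuous_on UNIV h \<and> range h = A)"

text \<open>A Borel space is analytic if it is Borel isomorphic to an analytic subset of
  a Polish space (equivalently, of the real line) with the relative Borel structure.\<close>
definition analytic_borel_space :: "'a measure \<Rightarrow> bool" where
  "analytic_borel_space M \<longleftrightarrow>
     (\<exists>f g. f \<in> M \<rightarrow>\<^sub>M borel \<and> inj_on f (space M) \<and> analytic_real_set (f ` space M)
        \<and> g \<in> restrict_space borel (f ` space M) \<rightarrow>\<^sub>M M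
        \<and> (\<forall>x\<in>space M. g (f x) = x))"

record 'g groupoid =
  arrows :: "'g measure"
  units :: "'g set"
  rng :: "'g \<Rightarrow> 'g"
  src :: "'g \<Rightarrow> 'g"
  mult :: "'g \<Rightarrow> 'g \<Rightarrow> 'g"
  ginv :: "'g \<Rightarrow> 'g"

definition composable :: "('g, 'b) groupoid_scheme \<Rightarrow> ('g \<times> 'g) set" where
  "composable G = {(g, h). g \<in> space (arrows G) \<and> h \<in> space (arrows G) \<and> src G g = rng G h}"

definition borel_groupoid :: "('g, 'b) groupoid_scheme \<Rightarrow> bool" where
  "borel_groupoid G \<longleftrightarrow>
     analytic_borel_space (arrows G) \<and>
     units G \<subseteq> space (arrows G) \<and> units G \<in> sets (arrows G) \<and>
     (\<forall>g\<in>space (arrows G). rng G g \<in> units G \<and> src G g \<in> units G) \<and>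
     (\<forall>u\<in>units G. rng G u = u \<and> src G u = u) \<and>
     (\<forall>(g, h)\<in>composable G. mult G g h \<in> space (arrows G) \<and>
        rng G (mult G g h) = rng G g \<and> src G (mult G g h) = src G h) \<and>
     (\<forall>g\<in>space (arrows G). \<forall>h\<in>space (arrows G). \<forall>k\<in>space (arrows G).
        src G g = rng G h \<longrightarrow> src G h = rng G k \<longrightarrow>
        mult G (mult G g h) k = mult G g (mult G h k)) \<and>
     (\<forall>g\<in>space (arrows G). mult G (rng G g) g = g \<and> mult G g (src G g) = g) \<and>
     (\<forall>g\<in>space (arrows G). ginv G g \<in> space (arrows G) \<and>
        rng G (ginv G g) = src G g \<and> src G (ginv G g) = rng G g \<and>
        mult G g (ginv G g) = rng G g \<and> mult G (ginv G g) g = src G g) \<and>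
     rng G \<in> arrows G \<rightarrow>\<^sub>M arrows G \<and> src G \<in> arrows G \<rightarrow>\<^sub>M arrows G \<and>
     ginv G \<in> arrows G \<rightarrow>\<^sub>M arrows G \<and>
     (\<lambda>(g, h). mult G g h) \<in> restrict_space (arrows G \<Otimes>\<^sub>M arrows G) (composable G) \<rightarrow>\<^sub>M arrows G"

text \<open>\<open>sX\<close> is the moment map, \<open>act x \<gamma>\<close> is \<open>x \<cdot> \<gamma>\<close> (defined when \<open>sX x = r \<gamma>\<close>).\<close>
definition action_domain :: "'x measure \<Rightarrow> ('g, 'b) groupoid_scheme \<Rightarrow> ('x \<Rightarrow> 'g) \<Rightarrow> ('x \<times> 'g) set" where
  "action_domain X G sX = {(x, \<gamma>). x \<in> space X \<and> \<gamma> \<in> space (arrows G) \<and> sX x = rng G \<gamma>}"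

definition right_borel_G_space ::
  "'x measure \<Rightarrow> ('g, 'b) groupoid_scheme \<Rightarrow> ('x \<Rightarrow> 'g) \<Rightarrow> ('x \<Rightarrow> 'g \<Rightarrow> 'x) \<Rightarrow> bool" where
  "right_borel_G_space X G sX act \<longleftrightarrow>
     analytic_borel_space X \<and>
     sX \<in> X \<rightarrow>\<^sub>M arrows G \<and> (\<forall>x\<in>space X. sX x \<in> units G) \<and>
     (\<lambda>(x, \<gamma>). act x \<gamma>) \<in> restrict_space (X \<Otimes>\<^sub>M arrows G) (action_domain X G sX) \<rightarrow>\<^sub>M X \<and>
     (\<forall>(x, \<gamma>)\<in>action_domain X G sX. act x \<gamma> \<in> space X \<and> sX (act x \<gamma>) = src G \<gamma>) \<and>
     (\<forall>x\<in>space X. act x (sX x) = x) \<and>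
     (\<forall>(x, \<gamma>)\<in>action_domain X G sX. \<forall>\<eta>\<in>space (arrows G). src G \<gamma> = rng G \<eta> \<longrightarrow>
        act (act x \<gamma>) \<eta> = act x (mult G \<gamma> \<eta>))"

definition free_action ::
  "'x measure \<Rightarrow> ('g, 'b) groupoid_scheme \<Rightarrow> ('x \<Rightarrow> 'g) \<Rightarrow> ('x \<Rightarrow> 'g \<Rightarrow> 'x) \<Rightarrow> bool" where
  "free_action X G sX act \<longleftrightarrow>
     (\<forall>(x, \<gamma>)\<in>action_domain X G sX. act x \<gamma> = x \<longrightarrow> \<gamma> \<in> units G)"

definition orbit ::
  "'x measure \<Rightarrow> ('g, 'b) groupoid_scheme \<Rightarrow> ('x \<Rightarrow> 'g) \<Rightarrow> ('x \<Rightarrow> 'g \<Rightarrow> 'x) \<Rightarrow> 'x \<Rightarrow> 'x set" where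
  "orbit X G sX act x = {act x \<gamma> | \<gamma>. (x, \<gamma>) \<in> action_domain X G sX}"

text \<open>The quotient map \<open>q = orbit X G sX act\<close>, and \<open>X/G\<close> with the quotient Borel structure.\<close>
definition orbit_space ::
  "'x measure \<Rightarrow> ('g, 'b) groupoid_scheme \<Rightarrow> ('x \<Rightarrow> 'g) \<Rightarrow> ('x \<Rightarrow> 'g \<Rightarrow> 'x) \<Rightarrow> 'x set measure" where
  "orbit_space X G sX act =
     (let q = orbit X G sX act in
      measure_of (q ` space X) {B. B \<subseteq> q ` space X \<and> q -` B \<inter> space X \<in> sets X} (\<lambda>_. 0))"

text \<open>A proper family is a family of probability measures
  \<open>m u\<close> on \<open>A\<close>, \<open>m u\<close> supported on the range fibre over \<open>u\<close>, Borel in \<open>u\<close>, and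
  equivariant: \<open>g \<cdot> m (s g) = m (r g)\<close>, where \<open>g \<cdot> \<mu>\<close> is the push-forward of \<open>\<mu>\<close>
  (a measure on the range fibre over \<open>s g\<close>) under \<open>h \<mapsto> g h\<close>.\<close>
definition proper_groupoid_family ::
  "'a measure \<Rightarrow> 'u measure \<Rightarrow> ('a \<Rightarrow> 'u) \<Rightarrow> ('a \<Rightarrow> 'u) \<Rightarrow> ('a \<Rightarrow> 'a \<Rightarrow> 'a)
     \<Rightarrow> ('u \<Rightarrow> 'a measure) \<Rightarrow> bool" where
  "proper_groupoid_family A U r s mul m \<longleftrightarrow>
     (\<forall>u\<in>space U. prob_space (m u) \<and> sets (m u) = sets A \<and>
        emeasure (m u) {a \<in> space A. r a = u} = 1) \<and>
     (\<forall>f :: 'a \<Rightarrow> ennreal. f \<in> borel_measurable A \<longrightarrow>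
        (\<lambda>u. \<integral>\<^sup>+ a. f a \<partial>(m u)) \<in> borel_measurable U) \<and>
     (\<forall>g\<in>space A. \<forall>E\<in>sets A.
        emeasure (m (r g)) E = emeasure (m (s g)) {h \<in> space A. r h = s g \<and> mul g h \<in> E})"

text \<open>\<open>X \<rtimes> G = {(x,\<gamma>). sX x = r \<gamma>}\<close>, with \<open>r(x,\<gamma>) = x\<close>, \<open>s(x,\<gamma>) = x \<cdot> \<gamma>\<close>,
  \<open>(x,\<gamma>)(x\<cdot>\<gamma>,\<eta>) = (x,\<gamma>\<eta>)\<close>, unit space \<open>X\<close>.\<close>
definition transformation_arrows ::
  "'x measure \<Rightarrow> ('g, 'b) groupoid_scheme \<Rightarrow> ('x \<Rightarrow> 'g) \<Rightarrow> ('x \<times> 'g) measure" where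
  "transformation_arrows X G sX = restrict_space (X \<Otimes>\<^sub>M arrows G) (action_domain X G sX)"

definition proper_right_borel_G_space ::
  "'x measure \<Rightarrow> ('g, 'b) groupoid_scheme \<Rightarrow> ('x \<Rightarrow> 'g) \<Rightarrow> ('x \<Rightarrow> 'g \<Rightarrow> 'x) \<Rightarrow> bool" where
  "proper_right_borel_G_space X G sX act \<longleftrightarrow>
     right_borel_G_space X G sX act \<and>
     (\<exists>m. proper_groupoid_family (transformation_arrows X G sX) X
            (\<lambda>(x, \<gamma>). x) (\<lambda>(x, \<gamma>). act x \<gamma>)
            (\<lambda>(x, \<gamma>) (y, \<eta>). (x, mult G \<gamma> \<eta>)) m)"

end

theory Submission
  imports Defs
begin

text \<open>
  Let \<open>base x\<close> be the point that the cross section picks in the orbit of \<open>x\<close>. Freeness makes the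
  arrow \<open>base_arrow x\<close> with \<open>base x \<cdot> base_arrow x = x\<close> unique, hence
  \<open>base_arrow (x \<cdot> \<gamma>) = base_arrow x \<gamma>\<close>, and so the Dirac measures at
  \<open>(x, (base_arrow x)\<inverse>)\<close> form an equivariant family of probability measures on \<open>X \<rtimes> G\<close>.
  The one substantial point is that \<open>base_arrow\<close> is Borel. Its graph is Borel, and a map between
  analytic Borel spaces with Borel graph is Borel: the preimage of a Borel set and its complement are both
  projections of Borel sets, hence disjoint analytic sets, and Lusin's separation theorem puts a
  Borel set between them.
\<close>

section \<open>The Baire space and Souslin sets\<close>

text \<open>
  \<open>agree k a b\<close> says that \<open>a\<close> and \<open>b\<close> lie in the same basic open set of level \<open>k\<close> of the Baire
  space \<open>\<nat>\<^sup>\<nat>\<close>; closedness and continuity below are the product-topology notions expressed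
  through it.
\<close>

definition agree :: "nat \<Rightarrow> (nat \<Rightarrow> nat) \<Rightarrow> (nat \<Rightarrow> nat) \<Rightarrow> bool" where
  "agree k a b \<longleftrightarrow> (\<forall>i<k. a i = b i)"

definition cylinder :: "nat list \<Rightarrow> (nat \<Rightarrow> nat) set" where
  "cylinder s = {a. \<forall>i<length s. a i = s ! i}"

definition baire_closed :: "(nat \<Rightarrow> nat) set \<Rightarrow> bool" where
  "baire_closed F \<longleftrightarrow> (\<forall>a. (\<forall>k. \<exists>b\<in>F. agree k a b) \<longrightarrow> a \<in> F)"

definition baire_continuous_on :: "(nat \<Rightarrow> nat) set \<Rightarrow> ((nat \<Rightarrow> nat) \<Rightarrow> (nat \<Rightarrow> nat)) \<Rightarrow> bool" where
  "baire_continuous_on F h \<longleftrightarrow> (\<forall>a\<in>F. \<forall>m. \<exists>k. \<forall>b\<in>F. agree k a b \<longrightarrow> agree m (h a) (h b))"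

definition baire_real_continuous_on :: "(nat \<Rightarrow> nat) set \<Rightarrow> ((nat \<Rightarrow> nat) \<Rightarrow> real) \<Rightarrow> bool" where
  "baire_real_continuous_on F h \<longleftrightarrow>
     (\<forall>a\<in>F. \<forall>e>0. \<exists>k. \<forall>b\<in>F. agree k a b \<longrightarrow> dist (h b) (h a) < e)"

definition souslin_baire :: "(nat \<Rightarrow> nat) set \<Rightarrow> bool" where
  "souslin_baire A \<longleftrightarrow> (\<exists>F h. baire_closed F \<and> baire_continuous_on F h \<and> A = h ` F)"

definition souslin_real :: "real set \<Rightarrow> bool" where
  "souslin_real A \<longleftrightarrow> (\<exists>F h. baire_closed F \<and> baire_real_continuous_on F h \<and> A = h ` F)"

lemma agree_mono: "agree k a b \<Longrightarrow> j \<le> k \<Longrightarrow> agree j a b"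
  by (auto simp: agree_def)

lemma mem_cylinder_prefix: "b \<in> cylinder (map a [0..<k]) \<longleftrightarrow> agree k a b"
  by (auto simp: cylinder_def agree_def)

lemma cylinder_Nil: "cylinder [] = UNIV"
  by (simp add: cylinder_def)

lemma cylinder_snoc: "cylinder s = (\<Union>n. cylinder (s @ [n]))"
proof
  show "cylinder s \<subseteq> (\<Union>n. cylinder (s @ [n]))"
  proof
    fix a assume "a \<in> cylinder s"
    then have "a \<in> cylinder (s @ [a (length s)])"
      unfolding cylinder_def by (auto simp: nth_append less_Suc_eq)
    then show "a \<in> (\<Union>n. cylinder (s @ [n]))" by blast
  qed
qed (auto simp: cylinder_def nth_append)

lemma baire_closed_cylinder: "baire_closed (cylinder s)" "baire_closed (- cylinder s)"
proof -
  have "a \<in> cylinder s \<longleftrightarrow> b \<in> cylinder s" if "agree (length s) a b" for a b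
    using that by (auto simp: cylinder_def agree_def)
  then show "baire_closed (cylinder s)" "baire_closed (- cylinder s)"
    unfolding baire_closed_def by (metis Compl_iff)+
qed

lemma souslin_baire_closed: "baire_closed F \<Longrightarrow> souslin_baire F"
  unfolding souslin_baire_def baire_continuous_on_def by (rule exI[of _ F], rule exI[of _ id]) auto

lemma souslin_baire_empty: "souslin_baire {}"
  unfolding souslin_baire_def baire_closed_def baire_continuous_on_def by (rule exI[of _ "{}"]) auto

lemma baire_continuous_on_comp:
  assumes "baire_continuous_on F f" "baire_continuous_on E g" "f ` F \<subseteq> E"
  shows "baire_continuous_on F (g \<circ> f)"
  unfolding baire_continuous_on_def
proof (intro ballI allI)
  fix a m assume a: "a \<in> F"
  obtain j where j: "\<forall>c\<in>E. agree j (f a) c \<longrightarrow> agree m (g (f a)) (g c)"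
    using assms(2,3) a unfolding baire_continuous_on_def by blast
  obtain k where "\<forall>b\<in>F. agree k a b \<longrightarrow> agree j (f a) (f b)"
    using assms(1) a unfolding baire_continuous_on_def by blast
  with j assms(3) show "\<exists>k. \<forall>b\<in>F. agree k a b \<longrightarrow> agree m ((g \<circ> f) a) ((g \<circ> f) b)"
    by auto
qed

lemma baire_real_continuous_on_comp:
  assumes "baire_continuous_on F f" "baire_real_continuous_on E g" "f ` F \<subseteq> E"
  shows "baire_real_continuous_on F (g \<circ> f)"
  unfolding baire_real_continuous_on_def
proof (intro ballI allI impI)
  fix a and e :: real assume a: "a \<in> F" and e: "e > 0"
  obtain j where j: "\<forall>c\<in>E. agree j (f a) c \<longrightarrow> dist (g c) (g (f a)) < e"
    using assms(2,3) a e unfolding baire_real_continuous_on_def by blast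
  obtain k where k: "\<forall>b\<in>F. agree k a b \<longrightarrow> agree j (f a) (f b)"
    using assms(1) a unfolding baire_continuous_on_def by blast
  have "dist ((g \<circ> f) b) ((g \<circ> f) a) < e" if "b \<in> F" "agree k a b" for b
    using j k assms(3) that by simp blast
  then show "\<exists>k. \<forall>b\<in>F. agree k a b \<longrightarrow> dist ((g \<circ> f) b) ((g \<circ> f) a) < e"
    by blast
qed

lemma baire_continuous_on_subset:
  assumes "baire_continuous_on F f" "E \<subseteq> F"
  shows "baire_continuous_on E f"
  unfolding baire_continuous_on_def
proof (intro ballI allI)
  fix a m assume "a \<in> E"
  then obtain k where "\<forall>b\<in>F. agree k a b \<longrightarrow> agree m (f a) (f b)"
    using assms unfolding baire_continuous_on_def by blast
  then show "\<exists>k. \<forall>b\<in>E. agree k a b \<longrightarrow> agree m (f a) (f b)" using assms(2) by blast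
qed

lemma baire_closed_INT: "(\<And>n. baire_closed (F n)) \<Longrightarrow> baire_closed (\<Inter>n. F n)"
  unfolding baire_closed_def by (metis INT_E INT_I)

lemma baire_closed_equalizer:
  assumes F: "baire_closed F" and f: "baire_continuous_on F f" and g: "baire_continuous_on F g"
  shows "baire_closed {a \<in> F. f a = g a}"
  unfolding baire_closed_def
proof (intro allI impI)
  fix a assume lim: "\<forall>k. \<exists>b\<in>{a \<in> F. f a = g a}. agree k a b"
  then have "\<forall>k. \<exists>b\<in>F. agree k a b" by auto
  then have a: "a \<in> F" using F unfolding baire_closed_def by blast
  have "f a j = g a j" for j
  proof -
    obtain k1 where k1: "\<forall>b\<in>F. agree k1 a b \<longrightarrow> agree (Suc j) (f a) (f b)"
      using f a unfolding baire_continuous_on_def by blast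
    obtain k2 where k2: "\<forall>b\<in>F. agree k2 a b \<longrightarrow> agree (Suc j) (g a) (g b)"
      using g a unfolding baire_continuous_on_def by blast
    obtain b where b: "b \<in> F" "f b = g b" "agree (max k1 k2) a b" using lim by blast
    have "agree (Suc j) (f a) (f b)" using k1 b(1) agree_mono[OF b(3), of k1] by simp
    moreover have "agree (Suc j) (g a) (g b)" using k2 b(1) agree_mono[OF b(3), of k2] by simp
    ultimately show ?thesis using b(2) by (simp add: agree_def)
  qed
  with a show "a \<in> {a \<in> F. f a = g a}" by auto
qed

lemma agree_Suc_iff: "agree (Suc k) a b \<longleftrightarrow> a 0 = b 0 \<and> agree k (a \<circ> Suc) (b \<circ> Suc)"
  by (auto simp: agree_def less_Suc_eq_0_disj)

lemma baire_closed_head_tail: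
  assumes "\<And>n. baire_closed (F n)"
  shows "baire_closed {a. a \<circ> Suc \<in> F (a 0)}"
  unfolding baire_closed_def
proof (intro allI impI CollectI)
  fix a assume lim: "\<forall>k. \<exists>b\<in>{a. a \<circ> Suc \<in> F (a 0)}. agree k a b"
  have "\<exists>c\<in>F (a 0). agree k (a \<circ> Suc) c" for k
  proof -
    obtain b where "b \<circ> Suc \<in> F (b 0)" "agree (Suc k) a b" using lim by blast
    then show ?thesis unfolding agree_Suc_iff by auto
  qed
  then show "a \<circ> Suc \<in> F (a 0)" using assms unfolding baire_closed_def by blast
qed

lemma souslin_baire_Union:
  fixes A :: "nat \<Rightarrow> (nat \<Rightarrow> nat) set"
  assumes "\<And>n. souslin_baire (A n)"
  shows "souslin_baire (\<Union>n. A n)"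
proof -
  from assms obtain F h
    where Fh: "\<And>n. baire_closed (F n) \<and> baire_continuous_on (F n) (h n) \<and> A n = h n ` F n"
    unfolding souslin_baire_def by metis
  \<comment> \<open>the first coordinate selects the index \<open>n\<close>, the remaining ones a point of \<open>F n\<close>\<close>
  define E where "E = {a :: nat \<Rightarrow> nat. a \<circ> Suc \<in> F (a 0)}"
  define H where "H a = h (a 0) (a \<circ> Suc)" for a
  have "baire_closed E"
    unfolding E_def using Fh by (intro baire_closed_head_tail) blast
  moreover have "baire_continuous_on E H"
    unfolding baire_continuous_on_def
  proof (intro ballI allI)
    fix a m assume "a \<in> E"
    then obtain k where k: "\<forall>b\<in>F (a 0). agree k (a \<circ> Suc) b \<longrightarrow> agree m (H a) (h (a 0) b)"
      using Fh unfolding baire_continuous_on_def E_def H_def by blast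
    have "agree m (H a) (H b)" if "b \<in> E" "agree (Suc k) a b" for b
      using k that unfolding E_def H_def agree_Suc_iff by auto
    then show "\<exists>k. \<forall>b\<in>E. agree k a b \<longrightarrow> agree m (H a) (H b)" by blast
  qed
  moreover have "(\<Union>n. A n) = H ` E"
  proof
    show "H ` E \<subseteq> (\<Union>n. A n)" using Fh by (auto simp: H_def E_def)
    show "(\<Union>n. A n) \<subseteq> H ` E"
    proof
      fix y assume "y \<in> (\<Union>n. A n)"
      then obtain n b where "b \<in> F n" "y = h n b" using Fh by blast
      moreover have "case_nat n b \<circ> Suc = b" by auto
      ultimately show "y \<in> H ` E" unfolding E_def H_def by (intro image_eqI[of _ _ "case_nat n b"]) auto
    qed
  qed
  ultimately show ?thesis unfolding souslin_baire_def by blast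
qed
definition seq_component :: "(nat \<Rightarrow> nat) \<Rightarrow> nat \<Rightarrow> (nat \<Rightarrow> nat)" where
  "seq_component a n = (\<lambda>k. a (prod_encode (n, k)))"

definition seq_join :: "(nat \<Rightarrow> nat \<Rightarrow> nat) \<Rightarrow> (nat \<Rightarrow> nat)" where
  "seq_join b = (\<lambda>j. case prod_decode j of (n, k) \<Rightarrow> b n k)"

lemma seq_component_join [simp]: "seq_component (seq_join b) n = b n"
  by (simp add: seq_component_def seq_join_def)

lemma triangle_mono: "a \<le> b \<Longrightarrow> triangle a \<le> triangle b"
  by (induction b) (auto simp: le_Suc_eq)

lemma prod_encode_strict_mono2: "k < m \<Longrightarrow> prod_encode (n, k) < prod_encode (n, m)"
proof -
  assume "k < m"
  have "triangle (n + k) < triangle (Suc (n + k))" by simp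
  also have "\<dots> \<le> triangle (n + m)" using \<open>k < m\<close> by (intro triangle_mono) simp
  finally show ?thesis by (simp add: prod_encode_def)
qed

lemma agree_seq_component:
  "agree (Suc (prod_encode (n, m))) a b \<Longrightarrow> agree m (seq_component a n) (seq_component b n)"
  unfolding agree_def seq_component_def
  using prod_encode_strict_mono2[of _ m n] by (simp add: less_Suc_eq_le less_imp_le)

lemma baire_continuous_seq_component: "baire_continuous_on F (\<lambda>a. seq_component a n)"
  unfolding baire_continuous_on_def
  by (intro ballI allI exI[of _ "Suc (prod_encode (n, _))"] impI agree_seq_component)

lemma baire_closed_components:
  assumes "\<And>n. baire_closed (F n)"
  shows "baire_closed {a. \<forall>n. seq_component a n \<in> F n}"
  unfolding baire_closed_def
proof (intro allI impI CollectI)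
  fix a n assume lim: "\<forall>k. \<exists>b\<in>{a. \<forall>n. seq_component a n \<in> F n}. agree k a b"
  have "\<exists>c\<in>F n. agree m (seq_component a n) c" for m
  proof -
    obtain b where "\<forall>n. seq_component b n \<in> F n" "agree (Suc (prod_encode (n, m))) a b"
      using lim by blast
    then show ?thesis using agree_seq_component by blast
  qed
  then show "seq_component a n \<in> F n" using assms unfolding baire_closed_def by blast
qed

lemma souslin_baire_Inter:
  fixes A :: "nat \<Rightarrow> (nat \<Rightarrow> nat) set"
  assumes "\<And>n. souslin_baire (A n)"
  shows "souslin_baire (\<Inter>n. A n)"
proof -
  from assms obtain F h
    where Fh: "\<And>n. baire_closed (F n) \<and> baire_continuous_on (F n) (h n) \<and> A n = h n ` F n"
    unfolding souslin_baire_def by metis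
  define P where "P = {a. \<forall>n. seq_component a n \<in> F n}"
  define hc where "hc n = h n \<circ> (\<lambda>a. seq_component a n)" for n
  define E where "E = (\<Inter>n. {a \<in> P. hc n a = hc 0 a})"
  have hc: "baire_continuous_on P (hc n)" for n
    unfolding hc_def
    by (rule baire_continuous_on_comp[where E = "F n"])
      (use Fh baire_continuous_seq_component in \<open>auto simp: P_def\<close>)
  have "baire_closed P"
    unfolding P_def using Fh by (intro baire_closed_components) blast
  then have "baire_closed E"
    unfolding E_def using hc by (intro baire_closed_INT baire_closed_equalizer)
  moreover have "baire_continuous_on E (hc 0)"
    using hc by (rule baire_continuous_on_subset) (auto simp: E_def)
  moreover have "(\<Inter>n. A n) = hc 0 ` E"
  proof
    show "hc 0 ` E \<subseteq> (\<Inter>n. A n)"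
    proof (intro subsetI INT_I)
      fix y n assume "y \<in> hc 0 ` E"
      then obtain a where "a \<in> E" "y = hc 0 a" by blast
      then have "a \<in> P" "hc n a = y" unfolding E_def by auto
      then show "y \<in> A n" using Fh by (auto simp: P_def hc_def)
    qed
    show "(\<Inter>n. A n) \<subseteq> hc 0 ` E"
    proof
      fix y assume y: "y \<in> (\<Inter>n. A n)"
      have "\<exists>b. b \<in> F n \<and> h n b = y" for n
      proof -
        have "y \<in> A n" using y by blast
        then have "y \<in> h n ` F n" using Fh[of n] by simp
        then show ?thesis by (auto simp: image_iff)
      qed
      then obtain b where b: "\<forall>n. b n \<in> F n \<and> h n (b n) = y"
        using choice[of "\<lambda>n b. b \<in> F n \<and> h n b = y"] by blast
      then have "seq_join b \<in> E" "hc 0 (seq_join b) = y"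
        unfolding E_def P_def hc_def by simp_all
      then show "y \<in> hc 0 ` E" by blast
    qed
  qed
  ultimately show ?thesis unfolding souslin_baire_def by blast
qed

lemma souslin_baire_sigma_sets:
  "W \<in> sigma_sets UNIV (range cylinder) \<Longrightarrow> souslin_baire W \<and> souslin_baire (- W)"
proof (induction rule: sigma_sets.induct)
  case (Basic a)
  then show ?case using baire_closed_cylinder souslin_baire_closed by blast
next
  case Empty
  show ?case
    using souslin_baire_empty souslin_baire_closed[OF baire_closed_cylinder(1)[of "[]"]]
    by (simp add: cylinder_Nil)
next
  case (Compl a)
  then show ?case by (simp add: Diff_eq)
next
  case (Union A)
  have "- (\<Union>i. A i) = (\<Inter>i. - A i)" by auto
  then show ?case using Union souslin_baire_Union souslin_baire_Inter by simp
qed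

lemma souslin_real_image:
  assumes "souslin_baire W" "baire_real_continuous_on UNIV g"
  shows "souslin_real (g ` W)"
proof -
  from assms(1) obtain F h where F: "baire_closed F" "baire_continuous_on F h" "W = h ` F"
    unfolding souslin_baire_def by blast
  then have "baire_real_continuous_on F (g \<circ> h)"
    using assms(2) by (intro baire_real_continuous_on_comp) auto
  with F show ?thesis unfolding souslin_real_def by (metis image_comp)
qed

definition baire_measure :: "(nat \<Rightarrow> nat) measure" where
  "baire_measure = sigma UNIV (range cylinder)"

lemma sets_baire_measure: "sets baire_measure = sigma_sets UNIV (range cylinder)"
  unfolding baire_measure_def by (rule sets_measure_of) auto

lemma space_baire_measure [simp]: "space baire_measure = UNIV"
  unfolding baire_measure_def by (rule space_measure_of_conv)

lemma baire_open_in_sets: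
  assumes "\<And>a. a \<in> S \<Longrightarrow> \<exists>k. \<forall>b. agree k a b \<longrightarrow> b \<in> S"
  shows "S \<in> sets baire_measure"
proof -
  have "S = \<Union>{cylinder s | s. cylinder s \<subseteq> S}"
  proof
    show "S \<subseteq> \<Union>{cylinder s | s. cylinder s \<subseteq> S}"
    proof
      fix a assume "a \<in> S"
      then obtain k where "\<forall>b. agree k a b \<longrightarrow> b \<in> S" using assms by blast
      then have "cylinder (map a [0..<k]) \<subseteq> S" by (auto simp: mem_cylinder_prefix)
      moreover have "a \<in> cylinder (map a [0..<k])" by (simp add: mem_cylinder_prefix agree_def)
      ultimately show "a \<in> \<Union>{cylinder s | s. cylinder s \<subseteq> S}" by blast
    qed
  qed auto
  moreover have "\<Union>{cylinder s | s. cylinder s \<subseteq> S} \<in> sets baire_measure"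
  proof (rule sets.countable_Union)
    have "{cylinder s | s. cylinder s \<subseteq> S} \<subseteq> range cylinder" by auto
    then show "countable {cylinder s | s. cylinder s \<subseteq> S}"
      by (rule countable_subset) simp
    show "{cylinder s | s. cylinder s \<subseteq> S} \<subseteq> sets baire_measure"
      by (auto simp: sets_baire_measure)
  qed
  ultimately show ?thesis by simp
qed

lemma baire_real_continuous_measurable:
  assumes g: "baire_real_continuous_on UNIV g"
  shows "g \<in> borel_measurable baire_measure"
proof (rule borel_measurableI)
  fix S :: "real set" assume S: "open S"
  show "g -` S \<inter> space baire_measure \<in> sets baire_measure"
  proof (rule baire_open_in_sets)
    fix a assume "a \<in> g -` S \<inter> space baire_measure"
    then obtain e where e: "e > 0" "ball (g a) e \<subseteq> S" using S open_contains_ball by force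
    then obtain k where "\<forall>b. agree k a b \<longrightarrow> dist (g b) (g a) < e"
      using g unfolding baire_real_continuous_on_def by blast
    then show "\<exists>k. \<forall>b. agree k a b \<longrightarrow> b \<in> g -` S \<inter> space baire_measure"
      using e by (auto simp: dist_commute subset_iff)
  qed
qed

lemma baire_continuous_measurable:
  assumes g: "baire_continuous_on UNIV g"
  shows "g \<in> baire_measure \<rightarrow>\<^sub>M baire_measure"
  unfolding baire_measure_def
proof (rule measurable_measure_of)
  fix C assume "C \<in> range cylinder"
  then obtain t where t: "C = cylinder t" by blast
  show "g -` C \<inter> space (sigma UNIV (range cylinder)) \<in> sets (sigma UNIV (range cylinder))"
    unfolding baire_measure_def[symmetric]
  proof (rule baire_open_in_sets)
    fix a assume "a \<in> g -` C \<inter> space baire_measure"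
    then have ga: "g a \<in> cylinder t" using t by simp
    obtain k where k: "\<forall>b. agree k a b \<longrightarrow> agree (length t) (g a) (g b)"
      using g unfolding baire_continuous_on_def by blast
    have "b \<in> g -` C" if "agree k a b" for b
      using k that ga unfolding t by (auto simp: cylinder_def agree_def)
    then show "\<exists>k. \<forall>b. agree k a b \<longrightarrow> b \<in> g -` C \<inter> space baire_measure" by auto
  qed
qed auto

lemma continuous_on_imp_baire_real_continuous:
  fixes h :: "(nat \<Rightarrow> nat) \<Rightarrow> real"
  assumes h: "continuous_on UNIV h"
  shows "baire_real_continuous_on UNIV h"
  unfolding baire_real_continuous_on_def
proof (intro ballI allI impI, rule ccontr)
  fix a and e :: real
  assume e: "e > 0" and "\<not> (\<exists>k. \<forall>b\<in>UNIV. agree k a b \<longrightarrow> dist (h b) (h a) < e)"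
  then have "\<forall>k. \<exists>b. agree k a b \<and> dist (h b) (h a) \<ge> e" by (auto simp: not_less)
  then obtain B where B: "\<And>k. agree k a (B k) \<and> dist (h (B k)) (h a) \<ge> e" by metis
  have "limitin (product_topology (\<lambda>i. euclidean) UNIV) B a sequentially"
    unfolding limitin_componentwise
  proof (intro conjI ballI)
    fix i :: nat
    have "\<forall>\<^sub>F k in sequentially. B k i = a i"
      unfolding eventually_sequentially
    proof (intro exI[of _ "Suc i"] allI impI)
      fix k assume "Suc i \<le> k"
      then show "B k i = a i" using B[of k] unfolding agree_def by simp
    qed
    then show "limitin euclidean (\<lambda>c. B c i) (a i) sequentially"
      by (simp add: limitin_canonical_iff tendsto_eventually)
  qed auto
  then have "B \<longlonglongrightarrow> a" by (simp add: euclidean_product_topology limitin_canonical_iff)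
  moreover have "open (h -` ball (h a) e)"
    using h by (simp add: continuous_on_open_vimage[OF open_UNIV])
  ultimately have "\<forall>\<^sub>F k in sequentially. B k \<in> h -` ball (h a) e"
    using e by (intro topological_tendstoD) auto
  then obtain k where "dist (h (B k)) (h a) < e"
    by (auto simp: eventually_sequentially dist_commute)
  with B show False by (simp add: not_le[symmetric])
qed

section \<open>Lusin's separation theorem\<close>

definition borel_separated :: "real set \<Rightarrow> real set \<Rightarrow> bool" where
  "borel_separated P Q \<longleftrightarrow> (\<exists>C\<in>sets borel. P \<subseteq> C \<and> C \<inter> Q = {})"

lemma borel_separated_empty: "borel_separated {} Q" "borel_separated P {}"
  unfolding borel_separated_def by (rule bexI[of _ "{}"], simp, simp) (rule bexI[of _ UNIV], simp, simp)

lemma borel_separated_UN: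
  fixes P Q :: "nat \<Rightarrow> real set"
  assumes "\<And>i j. borel_separated (P i) (Q j)"
  shows "borel_separated (\<Union>i. P i) (\<Union>j. Q j)"
proof -
  from assms obtain C where C: "\<And>i j. C i j \<in> sets borel \<and> P i \<subseteq> C i j \<and> C i j \<inter> Q j = {}"
    unfolding borel_separated_def by metis
  have "(\<Union>i. \<Inter>j. C i j) \<in> sets borel" using C by blast
  moreover have "(\<Union>i. P i) \<subseteq> (\<Union>i. \<Inter>j. C i j)" using C by blast
  moreover have "(\<Union>i. \<Inter>j. C i j) \<inter> (\<Union>j. Q j) = {}" using C by blast
  ultimately show ?thesis unfolding borel_separated_def by blast
qed

lemma not_borel_separated_branch:
  fixes P Q :: "nat list \<Rightarrow> real set"
  assumes P: "\<And>s. P s = (\<Union>n. P (s @ [n]))" and Q: "\<And>t. Q t = (\<Union>n. Q (t @ [n]))"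
    and root: "\<not> borel_separated (P []) (Q [])"
  obtains a b where "\<And>k. \<not> borel_separated (P (map a [0..<k])) (Q (map b [0..<k]))"
proof -
  define R where "R k st \<longleftrightarrow> length (fst st) = k \<and> length (snd st) = k \<and>
      \<not> borel_separated (P (fst st)) (Q (snd st))" for k and st :: "nat list \<times> nat list"
  have "\<exists>f. \<forall>k. R k (f k) \<and> (\<exists>i j. f (Suc k) = (fst (f k) @ [i], snd (f k) @ [j]))"
  proof (rule dependent_nat_choice[where P = R and Q = "\<lambda>k st st'. \<exists>i j. st' = (fst st @ [i], snd st @ [j])"])
    show "\<exists>st. R 0 st" using root by (intro exI[of _ "([], [])"]) (simp add: R_def)
    fix st k assume "R k st"
    then have "\<not> borel_separated (\<Union>i. P (fst st @ [i])) (\<Union>j. Q (snd st @ [j]))"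
      using P[of "fst st"] Q[of "snd st"] by (simp add: R_def)
    then obtain i j where "\<not> borel_separated (P (fst st @ [i])) (Q (snd st @ [j]))"
      using borel_separated_UN[of "\<lambda>i. P (fst st @ [i])" "\<lambda>j. Q (snd st @ [j])"] by blast
    with \<open>R k st\<close> show "\<exists>st'. R (Suc k) st' \<and> (\<exists>i j. st' = (fst st @ [i], snd st @ [j]))"
      by (intro exI[of _ "(fst st @ [i], snd st @ [j])"]) (auto simp: R_def)
  qed
  then obtain f where f: "\<And>k. R k (f k)" "\<And>k. \<exists>i j. f (Suc k) = (fst (f k) @ [i], snd (f k) @ [j])"
    by blast
  define a where "a k = fst (f (Suc k)) ! k" for k
  define b where "b k = snd (f (Suc k)) ! k" for k
  have prefix: "fst (f k) = map a [0..<k] \<and> snd (f k) = map b [0..<k]" for k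
  proof (induction k)
    case 0
    then show ?case using f(1)[of 0] by (simp add: R_def)
  next
    case (Suc k)
    obtain i j where "f (Suc k) = (fst (f k) @ [i], snd (f k) @ [j])" using f(2) by blast
    with Suc f(1)[of k] show ?case by (simp add: a_def b_def R_def nth_append)
  qed
  show thesis
  proof (rule that)
    fix k show "\<not> borel_separated (P (map a [0..<k])) (Q (map b [0..<k]))"
      using f(1)[of k] prefix[of k] by (simp add: R_def)
  qed
qed

lemma baire_closed_prefix_limit:
  assumes "baire_closed F" "\<And>k. F \<inter> cylinder (map a [0..<k]) \<noteq> {}"
  shows "a \<in> F"
proof -
  have "\<exists>b\<in>F. agree k a b" for k
    using assms(2)[of k] by (auto simp: mem_cylinder_prefix)
  then show ?thesis using assms(1) unfolding baire_closed_def by blast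
qed

lemma image_cylinder_prefix_shrinks:
  assumes "baire_real_continuous_on F h" "a \<in> F" "e > 0"
  shows "\<exists>k. \<forall>j\<ge>k. h ` (F \<inter> cylinder (map a [0..<j])) \<subseteq> ball (h a) e"
proof -
  obtain k where k: "\<forall>b\<in>F. agree k a b \<longrightarrow> dist (h b) (h a) < e"
    using assms unfolding baire_real_continuous_on_def by blast
  have "h b \<in> ball (h a) e" if "j \<ge> k" "b \<in> F" "agree j a b" for j b
  proof -
    have "dist (h b) (h a) < e" using k that(2) agree_mono[OF that(3) that(1)] by blast
    then show ?thesis by (simp add: dist_commute)
  qed
  then show ?thesis by (intro exI[of _ k]) (auto simp: mem_cylinder_prefix)
qed

lemma borel_separated_balls:
  assumes "P \<subseteq> ball x e" "Q \<subseteq> ball y e" "2 * e \<le> dist x y"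
  shows "borel_separated P Q"
proof -
  have "ball x e \<inter> ball y e = {}"
  proof (rule equals0I)
    fix z assume "z \<in> ball x e \<inter> ball y e"
    then have "dist x y < 2 * e"
      using dist_triangle3[of x y z] by (simp add: dist_commute)
    with assms(3) show False by simp
  qed
  with assms(1,2) show ?thesis
    unfolding borel_separated_def by (intro bexI[of _ "ball x e"] conjI) auto
qed

theorem souslin_real_borel_separated:
  assumes "souslin_real A" "souslin_real B" "A \<inter> B = {}"
  shows "borel_separated A B"
proof (rule ccontr)
  assume not_sep: "\<not> borel_separated A B"
  from assms(1) obtain F h where F: "baire_closed F" "baire_real_continuous_on F h" "A = h ` F"
    unfolding souslin_real_def by blast
  from assms(2) obtain F' h' where F': "baire_closed F'" "baire_real_continuous_on F' h'" "B = h' ` F'"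
    unfolding souslin_real_def by blast
  define P where "P s = h ` (F \<inter> cylinder s)" for s
  define Q where "Q t = h' ` (F' \<inter> cylinder t)" for t
  have "P s = (\<Union>n. P (s @ [n]))" "Q t = (\<Union>n. Q (t @ [n]))" for s t
    unfolding P_def Q_def by (subst cylinder_snoc, blast)+
  moreover have "\<not> borel_separated (P []) (Q [])"
    using not_sep F(3) F'(3) by (simp add: P_def Q_def cylinder_Nil)
  ultimately obtain a b where branch: "\<And>k. \<not> borel_separated (P (map a [0..<k])) (Q (map b [0..<k]))"
    by (rule not_borel_separated_branch) blast
  have "F \<inter> cylinder (map a [0..<k]) \<noteq> {}" "F' \<inter> cylinder (map b [0..<k]) \<noteq> {}" for k
    using branch[of k] borel_separated_empty by (auto simp: P_def Q_def)
  then have a: "a \<in> F" and b: "b \<in> F'"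
    using F(1) F'(1) by (auto intro: baire_closed_prefix_limit)
  define e where "e = dist (h a) (h' b) / 2"
  have "h a \<in> A" "h' b \<in> B" using a b F(3) F'(3) by simp_all
  with assms(3) have "e > 0" by (auto simp: e_def)
  obtain k1 where k1: "\<forall>j\<ge>k1. P (map a [0..<j]) \<subseteq> ball (h a) e"
    using image_cylinder_prefix_shrinks[OF F(2) a \<open>e > 0\<close>] unfolding P_def by (elim exE)
  obtain k2 where k2: "\<forall>j\<ge>k2. Q (map b [0..<j]) \<subseteq> ball (h' b) e"
    using image_cylinder_prefix_shrinks[OF F'(2) b \<open>e > 0\<close>] unfolding Q_def by (elim exE)
  define j where "j = max k1 k2"
  have "P (map a [0..<j]) \<subseteq> ball (h a) e" "Q (map b [0..<j]) \<subseteq> ball (h' b) e"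
    using k1 k2 by (simp_all add: j_def)
  then have "borel_separated (P (map a [0..<j])) (Q (map b [0..<j]))"
    by (rule borel_separated_balls) (simp add: e_def)
  with branch show False by simp
qed

section \<open>Borel maps with Borel graph between analytic spaces\<close>

lemma souslin_real_empty: "souslin_real {}"
  using souslin_real_image[OF souslin_baire_empty, of "\<lambda>_. 0"]
  by (simp add: baire_real_continuous_on_def)

definition analytic_embedding :: "'a measure \<Rightarrow> ('a \<Rightarrow> real) \<Rightarrow> (real \<Rightarrow> 'a) \<Rightarrow> bool" where
  "analytic_embedding M f g \<longleftrightarrow>
     f \<in> M \<rightarrow>\<^sub>M borel \<and> inj_on f (space M) \<and> analytic_real_set (f ` space M) \<and>
     g \<in> restrict_space borel (f ` space M) \<rightarrow>\<^sub>M M \<and> (\<forall>x\<in>space M. g (f x) = x)"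

lemma analytic_borel_space_embedding:
  "analytic_borel_space M \<longleftrightarrow> (\<exists>f g. analytic_embedding M f g)"
  unfolding analytic_borel_space_def analytic_embedding_def by blast

lemma analytic_borel_space_singleton:
  assumes "analytic_borel_space M" "x \<in> space M"
  shows "{x} \<in> sets M"
proof -
  obtain f g where f: "analytic_embedding M f g"
    using assms(1) analytic_borel_space_embedding by blast
  then have "{x} = f -` {f x} \<inter> space M"
    using assms(2) by (auto simp: analytic_embedding_def inj_on_def)
  also have "\<dots> \<in> sets M"
    using f by (intro measurable_sets[of f M borel]) (auto simp: analytic_embedding_def)
  finally show ?thesis .
qed

lemma analytic_embedding_parametrization:
  assumes emb: "analytic_embedding M f g" and ne: "space M \<noteq> {}"
  obtains h where "baire_real_continuous_on UNIV h" "range h = f ` space M"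
    "(\<lambda>a. g (h a)) \<in> baire_measure \<rightarrow>\<^sub>M M" "\<And>a. f (g (h a)) = h a"
proof -
  obtain h :: "(nat \<Rightarrow> nat) \<Rightarrow> real" where h: "continuous_on UNIV h" "range h = f ` space M"
    using emb ne unfolding analytic_embedding_def analytic_real_set_def by blast
  have cont: "baire_real_continuous_on UNIV h"
    using h(1) by (rule continuous_on_imp_baire_real_continuous)
  have "h \<in> baire_measure \<rightarrow>\<^sub>M restrict_space borel (f ` space M)"
    using baire_real_continuous_measurable[OF cont] h(2) by (intro measurable_restrict_space2) auto
  then have "(\<lambda>a. g (h a)) \<in> baire_measure \<rightarrow>\<^sub>M M"
    using emb unfolding analytic_embedding_def by (auto intro: measurable_comp[unfolded comp_def])
  moreover have "f (g (h a)) = h a" for a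
  proof -
    obtain x where "x \<in> space M" "h a = f x" using h(2) by (metis rangeI imageE)
    then show ?thesis using emb by (simp add: analytic_embedding_def)
  qed
  ultimately show thesis by (intro that[OF cont h(2)])
qed

lemma analytic_pair_parametrization:
  assumes embX: "analytic_embedding X fX gX" and Y: "analytic_borel_space Y"
    and ne: "space X \<noteq> {}" "space Y \<noteq> {}"
  obtains \<rho> where "\<rho> \<in> baire_measure \<rightarrow>\<^sub>M X \<Otimes>\<^sub>M Y" "space X \<times> space Y \<subseteq> range \<rho>"
    "baire_real_continuous_on UNIV (\<lambda>a. fX (fst (\<rho> a)))"
proof -
  obtain fY gY where embY: "analytic_embedding Y fY gY"
    using Y analytic_borel_space_embedding by blast
  obtain hX where hX: "baire_real_continuous_on UNIV hX" "range hX = fX ` space X"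
    "(\<lambda>a. gX (hX a)) \<in> baire_measure \<rightarrow>\<^sub>M X" "\<And>a. fX (gX (hX a)) = hX a"
    using analytic_embedding_parametrization[OF embX ne(1)] by metis
  obtain hY where hY: "range hY = fY ` space Y" "(\<lambda>a. gY (hY a)) \<in> baire_measure \<rightarrow>\<^sub>M Y"
    using analytic_embedding_parametrization[OF embY ne(2)] by metis
  \<comment> \<open>components \<open>0\<close> and \<open>1\<close> of a point of the Baire space parametrize \<open>X\<close> and \<open>Y\<close>\<close>
  define \<rho> where "\<rho> a = (gX (hX (seq_component a 0)), gY (hY (seq_component a 1)))" for a
  have "\<rho> \<in> baire_measure \<rightarrow>\<^sub>M X \<Otimes>\<^sub>M Y"
    unfolding \<rho>_def using hX(3) hY(2)
    by (intro measurable_Pair measurable_compose[OF baire_continuous_measurable[OF baire_continuous_seq_component]])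
  moreover have "space X \<times> space Y \<subseteq> range \<rho>"
  proof (clarify)
    fix x y assume x: "x \<in> space X" and y: "y \<in> space Y"
    then have "fX x \<in> range hX" "fY y \<in> range hY" using hX(2) hY(1) by simp_all
    then obtain a b where a: "hX a = fX x" and b: "hY b = fY y" by (metis rangeE)
    have "\<rho> (seq_join (\<lambda>n. if n = 0 then a else b)) = (x, y)"
      using embX embY x y by (simp add: \<rho>_def a b analytic_embedding_def)
    then show "(x, y) \<in> range \<rho>" by (metis rangeI)
  qed
  moreover have "(\<lambda>a. fX (fst (\<rho> a))) = hX \<circ> (\<lambda>a. seq_component a 0)"
    using hX(4) by (simp add: \<rho>_def comp_def)
  then have "baire_real_continuous_on UNIV (\<lambda>a. fX (fst (\<rho> a)))"
    using baire_real_continuous_on_comp[OF baire_continuous_seq_component hX(1)] by simp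
  ultimately show thesis by (rule that)
qed

lemma souslin_real_image_fst:
  assumes embX: "analytic_embedding X fX gX" and Y: "analytic_borel_space Y"
    and G: "G \<in> sets (X \<Otimes>\<^sub>M Y)"
  shows "souslin_real (fX ` fst ` G)"
proof (cases "G = {}")
  case True
  then show ?thesis by (simp add: souslin_real_empty)
next
  case False
  have G_space: "G \<subseteq> space X \<times> space Y"
    using sets.sets_into_space[OF G] by (simp add: space_pair_measure)
  with False have "space X \<noteq> {}" "space Y \<noteq> {}" by auto
  then obtain \<rho> where \<rho>: "\<rho> \<in> baire_measure \<rightarrow>\<^sub>M X \<Otimes>\<^sub>M Y" "space X \<times> space Y \<subseteq> range \<rho>"
    "baire_real_continuous_on UNIV (\<lambda>a. fX (fst (\<rho> a)))"
    by (rule analytic_pair_parametrization[OF embX Y])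
  from measurable_sets[OF \<rho>(1) G] have "\<rho> -` G \<in> sets baire_measure" by simp
  then have W: "souslin_baire (\<rho> -` G)"
    using souslin_baire_sigma_sets by (simp add: sets_baire_measure)
  have "\<rho> ` (\<rho> -` G) = G" using G_space \<rho>(2) by auto
  then have "fX ` fst ` G = (\<lambda>a. fX (fst (\<rho> a))) ` (\<rho> -` G)" by (metis image_image)
  then show ?thesis using souslin_real_image[OF W \<rho>(3)] by simp
qed

lemma analytic_sets_if_souslin_compl:
  assumes emb: "analytic_embedding X f g" and P: "P \<subseteq> space X"
    and "souslin_real (f ` P)" "souslin_real (f ` (space X - P))"
  shows "P \<in> sets X"
proof -
  have "f ` P \<inter> f ` (space X - P) = f ` (P \<inter> (space X - P))"
    using emb P by (intro inj_on_image_Int[symmetric]) (auto simp: analytic_embedding_def)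
  then have "f ` P \<inter> f ` (space X - P) = {}" by simp
  from souslin_real_borel_separated[OF assms(3,4) this]
  obtain C where C: "C \<in> sets borel" "f ` P \<subseteq> C" "C \<inter> f ` (space X - P) = {}"
    unfolding borel_separated_def by blast
  have "P = f -` C \<inter> space X"
  proof
    show "f -` C \<inter> space X \<subseteq> P" using C(3) by blast
  qed (use C(2) P in blast)
  also have "\<dots> \<in> sets X"
    using emb C(1) by (intro measurable_sets[of f X borel]) (auto simp: analytic_embedding_def)
  finally show ?thesis .
qed

theorem measurable_if_graph_in_sets:
  assumes X: "analytic_borel_space X" and Y: "analytic_borel_space Y"
    and \<phi>: "\<And>x. x \<in> space X \<Longrightarrow> \<phi> x \<in> space Y"
    and graph: "{p \<in> space (X \<Otimes>\<^sub>M Y). snd p = \<phi> (fst p)} \<in> sets (X \<Otimes>\<^sub>M Y)"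
  shows "\<phi> \<in> X \<rightarrow>\<^sub>M Y"
proof (rule measurableI)
  show "\<phi> x \<in> space Y" if "x \<in> space X" for x using \<phi> that .
  obtain f g where emb: "analytic_embedding X f g"
    using X analytic_borel_space_embedding by blast
  fix B assume B: "B \<in> sets Y"
  define \<Gamma> where "\<Gamma> = {p \<in> space (X \<Otimes>\<^sub>M Y). snd p = \<phi> (fst p)}"
  \<comment> \<open>both the preimage of \<open>B\<close> and its complement are projections of measurable sets\<close>
  have "\<phi> -` B \<inter> space X = fst ` (\<Gamma> \<inter> space X \<times> B)"
    "space X - \<phi> -` B \<inter> space X = fst ` (\<Gamma> \<inter> space X \<times> (space Y - B))"
    using \<phi> by (force simp: \<Gamma>_def space_pair_measure)+
  moreover have "\<Gamma> \<inter> space X \<times> B \<in> sets (X \<Otimes>\<^sub>M Y)" "\<Gamma> \<inter> space X \<times> (space Y - B) \<in> sets (X \<Otimes>\<^sub>M Y)"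
    using graph B unfolding \<Gamma>_def by auto
  ultimately show "\<phi> -` B \<inter> space X \<in> sets X"
    using souslin_real_image_fst[OF emb Y] by (intro analytic_sets_if_souslin_compl[OF emb]) auto
qed


lemma analytic_equality_set:
  assumes "analytic_borel_space Y" "f \<in> M \<rightarrow>\<^sub>M Y" "g \<in> M \<rightarrow>\<^sub>M Y"
  shows "{x \<in> space M. f x = g x} \<in> sets M"
proof -
  obtain e e' where emb: "analytic_embedding Y e e'"
    using assms(1) analytic_borel_space_embedding by blast
  then have e: "e \<in> Y \<rightarrow>\<^sub>M borel" "inj_on e (space Y)" by (simp_all add: analytic_embedding_def)
  have "{x \<in> space M. f x = g x} = {x \<in> space M. e (f x) = e (g x)}"
    using e(2) measurable_space[OF assms(2)] measurable_space[OF assms(3)]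
    by (auto simp: inj_on_def)
  also have "\<dots> \<in> sets M"
    using measurable_compose[OF assms(2) e(1)] measurable_compose[OF assms(3) e(1)]
    by (rule measurable_equality_set)
  finally show ?thesis .
qed

section \<open>Free groupoid actions with a Borel cross section\<close>

lemma proper_groupoid_family_return:
  assumes \<sigma>: "\<sigma> \<in> U \<rightarrow>\<^sub>M A"
    and r_\<sigma>: "\<And>u. u \<in> space U \<Longrightarrow> r (\<sigma> u) = u"
    and r_s: "\<And>g. g \<in> space A \<Longrightarrow> r g \<in> space U \<and> s g \<in> space U"
    and fibre: "\<And>u. u \<in> space U \<Longrightarrow> {a \<in> space A. r a = u} \<in> sets A"
    and translate: "\<And>g E. g \<in> space A \<Longrightarrow> E \<in> sets A \<Longrightarrow>
      {h \<in> space A. r h = s g \<and> mul g h \<in> E} \<in> sets A"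
    and equivariant: "\<And>g. g \<in> space A \<Longrightarrow> mul g (\<sigma> (s g)) = \<sigma> (r g)"
  shows "proper_groupoid_family A U r s mul (\<lambda>u. return A (\<sigma> u))"
  unfolding proper_groupoid_family_def
proof (intro conjI ballI allI impI)
  fix u assume u: "u \<in> space U"
  then have "\<sigma> u \<in> space A" using measurable_space[OF \<sigma>] by blast
  then show "prob_space (return A (\<sigma> u))" "sets (return A (\<sigma> u)) = sets A"
    "emeasure (return A (\<sigma> u)) {a \<in> space A. r a = u} = 1"
    using u fibre[OF u] r_\<sigma>[OF u] by (simp_all add: prob_space_return)
next
  fix f :: "_ \<Rightarrow> ennreal" assume f: "f \<in> borel_measurable A"
  have "(\<lambda>u. f (\<sigma> u)) \<in> borel_measurable U" using \<sigma> f by measurable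
  moreover have "f (\<sigma> u) = (\<integral>\<^sup>+ a. f a \<partial>return A (\<sigma> u))" if "u \<in> space U" for u
    using measurable_space[OF \<sigma> that] f by (simp add: nn_integral_return)
  ultimately show "(\<lambda>u. \<integral>\<^sup>+ a. f a \<partial>return A (\<sigma> u)) \<in> borel_measurable U"
    by (rule measurable_cong[THEN iffD1, rotated])
next
  fix g E assume g: "g \<in> space A" and E: "E \<in> sets A"
  have "\<sigma> (s g) \<in> space A" using measurable_space[OF \<sigma>] r_s[OF g] by blast
  then have "\<sigma> (s g) \<in> {h \<in> space A. r h = s g \<and> mul g h \<in> E} \<longleftrightarrow> \<sigma> (r g) \<in> E"
    using r_\<sigma> r_s[OF g] equivariant[OF g] by auto
  then show "emeasure (return A (\<sigma> (r g))) E =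
      emeasure (return A (\<sigma> (s g))) {h \<in> space A. r h = s g \<and> mul g h \<in> E}"
    using E translate[OF g E] by (simp add: indicator_def)
qed

locale groupoid_action =
  fixes X :: "'x measure" and G :: "('g, 'b) groupoid_scheme"
    and sX :: "'x \<Rightarrow> 'g" and act :: "'x \<Rightarrow> 'g \<Rightarrow> 'x"
  assumes groupoid: "borel_groupoid G"
    and G_space: "right_borel_G_space X G sX act"
begin

lemma analytic_arrows: "analytic_borel_space (arrows G)"
  and units_subset: "units G \<subseteq> space (arrows G)"
  and rng_measurable: "rng G \<in> arrows G \<rightarrow>\<^sub>M arrows G"
  and ginv_measurable: "ginv G \<in> arrows G \<rightarrow>\<^sub>M arrows G"
  and mult_measurable:
    "(\<lambda>(g, h). mult G g h) \<in> restrict_space (arrows G \<Otimes>\<^sub>M arrows G) (composable G) \<rightarrow>\<^sub>M arrows G"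
  using groupoid unfolding borel_groupoid_def by blast+

lemma rng_unit: "u \<in> units G \<Longrightarrow> rng G u = u"
  using groupoid unfolding borel_groupoid_def by blast

lemma
  assumes "g \<in> space (arrows G)"
  shows mult_rng: "mult G (rng G g) g = g" and mult_src: "mult G g (src G g) = g"
    and ginv_closed: "ginv G g \<in> space (arrows G)"
    and rng_ginv: "rng G (ginv G g) = src G g" and src_ginv: "src G (ginv G g) = rng G g"
    and mult_ginv_right: "mult G g (ginv G g) = rng G g"
    and mult_ginv_left: "mult G (ginv G g) g = src G g"
  using groupoid assms unfolding borel_groupoid_def by blast+

lemma
  assumes "g \<in> space (arrows G)" "h \<in> space (arrows G)" "src G g = rng G h"
  shows mult_closed: "mult G g h \<in> space (arrows G)"
    and rng_mult: "rng G (mult G g h) = rng G g" and src_mult: "src G (mult G g h) = src G h"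
proof -
  have "(g, h) \<in> composable G" using assms by (simp add: composable_def)
  then show "mult G g h \<in> space (arrows G)" "rng G (mult G g h) = rng G g"
    "src G (mult G g h) = src G h"
    using groupoid unfolding borel_groupoid_def by blast+
qed

lemma mult_assoc:
  assumes "g \<in> space (arrows G)" "h \<in> space (arrows G)" "k \<in> space (arrows G)"
    "src G g = rng G h" "src G h = rng G k"
  shows "mult G (mult G g h) k = mult G g (mult G h k)"
  using groupoid assms unfolding borel_groupoid_def by blast

lemma analytic_space: "analytic_borel_space X"
  and sX_measurable: "sX \<in> X \<rightarrow>\<^sub>M arrows G"
  and act_measurable:
    "(\<lambda>(x, \<gamma>). act x \<gamma>) \<in> restrict_space (X \<Otimes>\<^sub>M arrows G) (action_domain X G sX) \<rightarrow>\<^sub>M X"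
  using G_space unfolding right_borel_G_space_def by blast+

lemma
  assumes "x \<in> space X"
  shows sX_in_units: "sX x \<in> units G" and act_sX: "act x (sX x) = x"
  using G_space assms unfolding right_borel_G_space_def by blast+

lemma action_domain_iff [simp]:
  "(x, g) \<in> action_domain X G sX \<longleftrightarrow> x \<in> space X \<and> g \<in> space (arrows G) \<and> sX x = rng G g"
  by (simp add: action_domain_def)

lemma
  assumes "(x, g) \<in> action_domain X G sX"
  shows act_closed: "act x g \<in> space X" and sX_act: "sX (act x g) = src G g"
  using G_space assms unfolding right_borel_G_space_def by blast+

lemma act_mult:
  assumes "(x, g) \<in> action_domain X G sX" "h \<in> space (arrows G)" "src G g = rng G h"
  shows "act (act x g) h = act x (mult G g h)"
  using G_space assms unfolding right_borel_G_space_def by blast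

lemma mult_ginv_cancel_left:
  assumes "g \<in> space (arrows G)" "h \<in> space (arrows G)" "rng G g = rng G h"
  shows "mult G g (mult G (ginv G g) h) = h"
proof -
  have "mult G g (mult G (ginv G g) h) = mult G (mult G g (ginv G g)) h"
    using assms by (simp add: mult_assoc ginv_closed rng_ginv src_ginv)
  also have "\<dots> = h"
    using assms by (simp add: mult_ginv_right mult_rng)
  finally show ?thesis .
qed

lemma ginv_mult_cancel_left:
  assumes "h \<in> space (arrows G)" "g \<in> space (arrows G)" "src G h = rng G g"
  shows "mult G (ginv G h) (mult G h g) = g"
proof -
  have "mult G (ginv G h) (mult G h g) = mult G (mult G (ginv G h) h) g"
    using assms by (simp add: mult_assoc ginv_closed src_ginv)
  also have "\<dots> = g"
    using assms by (simp add: mult_ginv_left mult_rng)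
  finally show ?thesis .
qed

lemma mult_ginv_mult:
  assumes h: "h \<in> space (arrows G)" and g: "g \<in> space (arrows G)" and hg: "src G h = rng G g"
  shows "mult G g (ginv G (mult G h g)) = ginv G h"
proof -
  define k where "k = mult G h g"
  have k: "k \<in> space (arrows G)" "rng G k = rng G h" "src G k = src G g"
    using assms by (simp_all add: k_def mult_closed rng_mult src_mult)
  have "ginv G h = mult G (ginv G h) (mult G k (ginv G k))"
    using h k mult_src[OF ginv_closed[OF h]] by (simp add: mult_ginv_right src_ginv)
  also have "\<dots> = mult G (mult G (ginv G h) k) (ginv G k)"
    using h k by (simp add: mult_assoc ginv_closed src_ginv rng_ginv)
  also have "mult G (ginv G h) k = g"
    unfolding k_def using assms by (rule ginv_mult_cancel_left)
  finally show ?thesis by (simp add: k_def)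
qed

lemma mem_orbit_iff:
  "z \<in> orbit X G sX act x \<longleftrightarrow> (\<exists>g. (x, g) \<in> action_domain X G sX \<and> z = act x g)"
  unfolding orbit_def by blast

lemma mem_orbit_self: "x \<in> space X \<Longrightarrow> x \<in> orbit X G sX act x"
  unfolding mem_orbit_iff using sX_in_units units_subset rng_unit act_sX
  by (intro exI[of _ "sX x"]) auto

lemma orbit_act:
  assumes xg: "(x, g) \<in> action_domain X G sX"
  shows "orbit X G sX act (act x g) = orbit X G sX act x"
proof (intro set_eqI iffI)
  fix z assume "z \<in> orbit X G sX act (act x g)"
  then obtain h where h: "(act x g, h) \<in> action_domain X G sX" "z = act (act x g) h"
    unfolding mem_orbit_iff by blast
  then have "z = act x (mult G g h)" "(x, mult G g h) \<in> action_domain X G sX"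
    using xg sX_act[OF xg] by (simp_all add: act_mult mult_closed rng_mult)
  then show "z \<in> orbit X G sX act x" unfolding mem_orbit_iff by blast
next
  fix z assume "z \<in> orbit X G sX act x"
  then obtain d where d: "(x, d) \<in> action_domain X G sX" "z = act x d"
    unfolding mem_orbit_iff by blast
  define e where "e = mult G (ginv G g) d"
  have e: "e \<in> space (arrows G)" "rng G e = src G g"
    using xg d by (simp_all add: e_def mult_closed rng_mult ginv_closed src_ginv rng_ginv)
  then have "(act x g, e) \<in> action_domain X G sX"
    using xg by (simp add: act_closed sX_act)
  moreover have "act (act x g) e = z"
    using xg d e by (simp add: act_mult e_def mult_ginv_cancel_left)
  ultimately show "z \<in> orbit X G sX act (act x g)" unfolding mem_orbit_iff by blast
qed

lemma space_orbit_space: "space (orbit_space X G sX act) = orbit X G sX act ` space X"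
  unfolding orbit_space_def Let_def by (rule space_measure_of_conv)

lemma orbit_measurable: "orbit X G sX act \<in> X \<rightarrow>\<^sub>M orbit_space X G sX act"
  unfolding orbit_space_def Let_def by (rule measurable_measure_of) auto

lemma space_transformation_arrows:
  "space (transformation_arrows X G sX) = action_domain X G sX"
  by (auto simp: transformation_arrows_def space_restrict_space space_pair_measure)

lemma transformation_fibre_in_sets:
  assumes "u \<in> space X"
  shows "{a \<in> space (transformation_arrows X G sX). fst a = u} \<in> sets (transformation_arrows X G sX)"
proof -
  have "fst \<in> transformation_arrows X G sX \<rightarrow>\<^sub>M X"
    unfolding transformation_arrows_def by (intro measurable_restrict_space1 measurable_fst)
  from measurable_sets[OF this analytic_borel_space_singleton[OF analytic_space assms]]
  show ?thesis by (simp add: vimage_def Int_def conj_commute)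
qed

lemma transformation_translate_in_sets:
  assumes xg: "(x, g) \<in> action_domain X G sX" and E: "E \<in> sets (transformation_arrows X G sX)"
  defines "A \<equiv> transformation_arrows X G sX"
  shows "{h \<in> space A. fst h = act x g \<and> (x, mult G g (snd h)) \<in> E} \<in> sets A"
proof -
  define T where "T = {a \<in> space A. fst a = act x g}"
  have T: "T \<in> sets A" unfolding T_def A_def using act_closed[OF xg] by (rule transformation_fibre_in_sets)
  have T_mem: "h \<in> T \<longleftrightarrow> h \<in> action_domain X G sX \<and> fst h = act x g" for h
    by (auto simp: T_def A_def space_transformation_arrows)
  have composable: "(g, snd h) \<in> composable G" if "h \<in> T" for h
    using that xg sX_act[OF xg] by (cases h) (auto simp: T_mem composable_def)
  have "(\<lambda>h. (g, snd h)) \<in> restrict_space A T \<rightarrow>\<^sub>M restrict_space (arrows G \<Otimes>\<^sub>M arrows G) (composable G)"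
    using xg composable unfolding A_def transformation_arrows_def
    by (intro measurable_restrict_space2 measurable_Pair measurable_restrict_space1 measurable_snd)
      (auto simp: space_restrict_space)
  from measurable_compose[OF this mult_measurable]
  have "(\<lambda>h. mult G g (snd h)) \<in> restrict_space A T \<rightarrow>\<^sub>M arrows G" by simp
  then have "(\<lambda>h. (x, mult G g (snd h))) \<in> restrict_space A T \<rightarrow>\<^sub>M A"
    using xg composable unfolding A_def transformation_arrows_def
    by (intro measurable_restrict_space2 measurable_Pair)
      (auto simp: space_restrict_space composable_def mult_closed rng_mult)
  from measurable_sets[OF this E[folded A_def]]
  have "{h \<in> T. (x, mult G g (snd h)) \<in> E} \<in> sets (restrict_space A T)"
    by (auto simp: space_restrict_space T_def elim!: back_subst[of "\<lambda>S. S \<in> _"])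
  then show ?thesis using T by (simp add: sets_restrict_space_iff T_def Collect_conj_eq[symmetric] conj_assoc)
qed

end

locale free_groupoid_action = groupoid_action +
  assumes free: "free_action X G sX act"
begin

lemma act_left_cancel:
  assumes g: "(y, g) \<in> action_domain X G sX" and g': "(y, g') \<in> action_domain X G sX"
    and eq: "act y g = act y g'"
  shows "g = g'"
proof -
  define d where "d = mult G (ginv G g) g'"
  have d: "d \<in> space (arrows G)" "rng G d = src G g"
    using g g' by (simp_all add: d_def mult_closed rng_mult ginv_closed src_ginv rng_ginv)
  have gd: "mult G g d = g'"
    using g g' by (simp add: d_def mult_ginv_cancel_left)
  have yd: "(act y g, d) \<in> action_domain X G sX"
    using g d by (simp add: act_closed sX_act)
  moreover have "act (act y g) d = act y g"
    using act_mult[OF g d(1) d(2)[symmetric]] gd eq by simp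
  ultimately have "d \<in> units G"
    using free unfolding free_action_def by blast
  then have "d = src G g" using d(2) rng_unit by metis
  then show ?thesis using gd g by (simp add: mult_src)
qed

end

locale free_groupoid_action_section = free_groupoid_action +
  fixes c :: "'x set \<Rightarrow> 'x"
  assumes section_measurable: "c \<in> orbit_space X G sX act \<rightarrow>\<^sub>M X"
    and section_orbit: "\<And>Q. Q \<in> space (orbit_space X G sX act) \<Longrightarrow> orbit X G sX act (c Q) = Q"
begin

definition base where
  "base x = c (orbit X G sX act x)"

definition base_arrow where
  "base_arrow x = (THE g. (base x, g) \<in> action_domain X G sX \<and> act (base x) g = x)"

lemma base_measurable: "base \<in> X \<rightarrow>\<^sub>M X"
  unfolding base_def using orbit_measurable section_measurable by (rule measurable_compose)

lemma
  assumes "x \<in> space X"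
  shows base_in_space: "base x \<in> space X" and orbit_base: "orbit X G sX act (base x) = orbit X G sX act x"
  using measurable_space[OF base_measurable assms] section_orbit assms
  by (simp_all add: base_def space_orbit_space)

lemma base_act: "(x, g) \<in> action_domain X G sX \<Longrightarrow> base (act x g) = base x"
  by (simp add: base_def orbit_act)

lemma base_arrow:
  assumes x: "x \<in> space X"
  shows "(base x, base_arrow x) \<in> action_domain X G sX" "act (base x) (base_arrow x) = x"
proof -
  have "x \<in> orbit X G sX act (base x)"
    using x by (simp add: orbit_base mem_orbit_self)
  then have "\<exists>g. (base x, g) \<in> action_domain X G sX \<and> act (base x) g = x"
    unfolding mem_orbit_iff by metis
  then have "\<exists>!g. (base x, g) \<in> action_domain X G sX \<and> act (base x) g = x"
    using act_left_cancel by metis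
  from theI'[OF this] show "(base x, base_arrow x) \<in> action_domain X G sX"
    "act (base x) (base_arrow x) = x"
    unfolding base_arrow_def by blast+
qed

lemma base_arrow_unique:
  assumes "x \<in> space X" "(base x, g) \<in> action_domain X G sX" "act (base x) g = x"
  shows "g = base_arrow x"
  using act_left_cancel[OF assms(2) base_arrow(1)[OF assms(1)]] assms base_arrow(2) by simp

lemma base_arrow_closed: "x \<in> space X \<Longrightarrow> base_arrow x \<in> space (arrows G)"
  and src_base_arrow: "x \<in> space X \<Longrightarrow> src G (base_arrow x) = sX x"
  using base_arrow sX_act[OF base_arrow(1)] by auto

lemma base_arrow_act:
  assumes xg: "(x, g) \<in> action_domain X G sX"
  shows "base_arrow (act x g) = mult G (base_arrow x) g"
proof (rule base_arrow_unique[symmetric])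
  have x: "x \<in> space X" using xg by simp
  show "act x g \<in> space X" using act_closed[OF xg] .
  show "(base (act x g), mult G (base_arrow x) g) \<in> action_domain X G sX"
    using xg base_arrow[OF x] by (simp add: base_act mult_closed rng_mult src_base_arrow)
  show "act (base (act x g)) (mult G (base_arrow x) g) = act x g"
    using xg base_arrow[OF x] by (simp add: base_act act_mult[symmetric] src_base_arrow)
qed

lemma base_arrow_measurable: "base_arrow \<in> X \<rightarrow>\<^sub>M arrows G"
proof (rule measurable_if_graph_in_sets[OF analytic_space analytic_arrows])
  show "base_arrow x \<in> space (arrows G)" if "x \<in> space X" for x
    using that by (rule base_arrow_closed)
  define M where "M = X \<Otimes>\<^sub>M arrows G"
  define K where "K = {p \<in> space M. sX (base (fst p)) = rng G (snd p)}"
  have K: "K \<in> sets M"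
    unfolding K_def M_def using analytic_arrows
    by (rule analytic_equality_set) (use base_measurable sX_measurable rng_measurable in measurable)
  have K_action_domain: "(base (fst p), snd p) \<in> action_domain X G sX" if "p \<in> K" for p
    using that base_in_space by (auto simp: K_def M_def space_pair_measure)
  have "(\<lambda>p. (base (fst p), snd p)) \<in> M \<rightarrow>\<^sub>M M"
    unfolding M_def by (intro measurable_Pair measurable_compose[OF measurable_fst base_measurable] measurable_snd)
  then have "(\<lambda>p. (base (fst p), snd p)) \<in> restrict_space M K \<rightarrow>\<^sub>M restrict_space M (action_domain X G sX)"
    using K_action_domain
    by (intro measurable_restrict_space2 measurable_restrict_space1) (auto simp: space_restrict_space)
  from measurable_compose[OF this act_measurable[folded M_def]]
  have "(\<lambda>p. act (base (fst p)) (snd p)) \<in> restrict_space M K \<rightarrow>\<^sub>M X" by simp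
  moreover have "fst \<in> restrict_space M K \<rightarrow>\<^sub>M X"
    unfolding M_def by (intro measurable_restrict_space1 measurable_fst)
  ultimately have "{p \<in> space (restrict_space M K). act (base (fst p)) (snd p) = fst p}
      \<in> sets (restrict_space M K)"
    by (rule analytic_equality_set[OF analytic_space])
  moreover have "(x, g) \<in> {p \<in> space M. snd p = base_arrow (fst p)} \<longleftrightarrow>
      (x, g) \<in> {p \<in> space (restrict_space M K). act (base (fst p)) (snd p) = fst p}" for x g
    using base_arrow[of x] base_arrow_unique[of x g] base_in_space[of x]
    by (auto simp: K_def M_def space_restrict_space space_pair_measure)
  then have "{p \<in> space M. snd p = base_arrow (fst p)}
      = {p \<in> space (restrict_space M K). act (base (fst p)) (snd p) = fst p}"
    unfolding set_eq_iff split_paired_All by blast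
  ultimately show "{p \<in> space (X \<Otimes>\<^sub>M arrows G). snd p = base_arrow (fst p)} \<in> sets (X \<Otimes>\<^sub>M arrows G)"
    using K by (simp add: sets_restrict_space_iff M_def)
qed

theorem proper_right_borel_G_space: "proper_right_borel_G_space X G sX act"
proof -
  define A where "A = transformation_arrows X G sX"
  \<comment> \<open>the Dirac family at the arrow from \<open>x\<close> back to its base point\<close>
  define \<sigma> where "\<sigma> x = (x, ginv G (base_arrow x))" for x
  have \<sigma>_domain: "\<sigma> x \<in> action_domain X G sX" if "x \<in> space X" for x
    using that by (simp add: \<sigma>_def base_arrow_closed ginv_closed rng_ginv src_base_arrow)
  have "\<sigma> \<in> X \<rightarrow>\<^sub>M A"
    unfolding A_def transformation_arrows_def \<sigma>_def using \<sigma>_domain[unfolded \<sigma>_def]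
    by (intro measurable_restrict_space2 measurable_Pair measurable_ident_sets
        measurable_compose[OF base_arrow_measurable ginv_measurable]) auto
  then have "proper_groupoid_family A X (\<lambda>(x, \<gamma>). x) (\<lambda>(x, \<gamma>). act x \<gamma>)
      (\<lambda>(x, \<gamma>) (y, \<eta>). (x, mult G \<gamma> \<eta>)) (\<lambda>u. return A (\<sigma> u))"
  proof (rule proper_groupoid_family_return)
    show "(case \<sigma> u of (x, \<gamma>) \<Rightarrow> x) = u" for u by (simp add: \<sigma>_def)
    fix g assume "g \<in> space A"
    then obtain x \<gamma> where g: "g = (x, \<gamma>)" "(x, \<gamma>) \<in> action_domain X G sX"
      by (cases g) (auto simp: A_def space_transformation_arrows)
    then show "(case g of (x, \<gamma>) \<Rightarrow> x) \<in> space X \<and> (case g of (x, \<gamma>) \<Rightarrow> act x \<gamma>) \<in> space X"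
      by (simp add: act_closed)
    show "(case g of (x, \<gamma>) \<Rightarrow> \<lambda>(y, \<eta>). (x, mult G \<gamma> \<eta>)) (\<sigma> (case g of (x, \<gamma>) \<Rightarrow> act x \<gamma>))
        = \<sigma> (case g of (x, \<gamma>) \<Rightarrow> x)"
      using g by (simp add: \<sigma>_def base_arrow_act mult_ginv_mult base_arrow_closed src_base_arrow)
    fix E assume "E \<in> sets A"
    then show "{h \<in> space A. (case h of (x, \<gamma>) \<Rightarrow> x) = (case g of (x, \<gamma>) \<Rightarrow> act x \<gamma>) \<and>
        (case g of (x, \<gamma>) \<Rightarrow> \<lambda>(y, \<eta>). (x, mult G \<gamma> \<eta>)) h \<in> E} \<in> sets A"
      using transformation_translate_in_sets[OF g(2)] by (simp add: g A_def split_beta)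
  next
    fix u assume "u \<in> space X"
    then show "{a \<in> space A. (case a of (x, \<gamma>) \<Rightarrow> x) = u} \<in> sets A"
      using transformation_fibre_in_sets by (simp add: A_def split_beta)
  qed
  then show ?thesis
    using G_space unfolding proper_right_borel_G_space_def A_def by blast
qed

end

theorem lemma3p4:
  fixes X :: "'x measure" and G :: "('g, 'b) groupoid_scheme"
    and sX :: "'x \<Rightarrow> 'g" and act :: "'x \<Rightarrow> 'g \<Rightarrow> 'x"
  assumes "borel_groupoid G"
    and "right_borel_G_space X G sX act"
    and "free_action X G sX act"
    and "\<exists>c \<in> orbit_space X G sX act \<rightarrow>\<^sub>M X.
           \<forall>Q \<in> space (orbit_space X G sX act). orbit X G sX act (c Q) = Q"
  shows "proper_right_borel_G_space X G sX act"
proof -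
  from assms(4) obtain c where c: "c \<in> orbit_space X G sX act \<rightarrow>\<^sub>M X"
    "\<And>Q. Q \<in> space (orbit_space X G sX act) \<Longrightarrow> orbit X G sX act (c Q) = Q"
    by blast
  interpret free_groupoid_action_section X G sX act c
    using assms(1-3) c by unfold_locales
  show ?thesis by (rule proper_right_borel_G_space)
qed

end
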